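(* (a) For each $h$, the function $d_h(f,f')=\frac{\sqrt d\,\|c_h\|}{\|f^\star_h\|_h}\|f-f'\|_h$ on $\mathcal F\times\mathcal F$ is a well-defined pseudo-metric, and for every $\boldsymbol f\in\mathcal F^H$ with greedy policy $\pi$ and every $h=2,\dots,H$, $$\sup_{g\in\partial\mathcal F,\ \|g\|_h>0}\frac{\|(\mathcal P^\pi_{h-1}-\mathcal P^\star_{h-1})g\|_{h-1}}{\|g\|_h}\le d_h(f_h,f^\star_h).$$ (b) Let $\rho_1,\dots,\rho_H>0$ with $\rho_h\le\frac{1}{2(H-h+1)}$ for all $h$ and additionally $\rho_h\le\frac12(H-h+1)^{-1}(1+\log H)^{-1}$ for $h=2,\dots,H-1$, and let $\mathcal N=\{\boldsymbol f\in\mathcal F^H:d_h(f_h,f^\star_h)\le\rho_h\ \forall h\}$. Then there are constants $\kappa_1,\dots,\kappa_{H-1}$ such that $\|\mathcal T^\star_hf_{h+1}-\mathcal T^\star_hf^\star_{h+1}\|_h\le\kappa_h\|f_{h+1}-f^\star_{h+1}\|_{h+1}$ for all $\boldsymbol f\in\mathcal N$ and $h=1,\dots,H-1$, and $\kappa_h\kappa_{h+1}\cdots\kappa_{h'-1}\le3$ for all $h\le h'$. (c) For every $\boldsymbol f\in\mathcal F^H$ with greedy policy $\pi$ and all $1\le h\le h'\le H-1$, $$\sup_{g\in\partial\mathcal F,\ \|g\|_{h'}>0}\frac{\big|\mathbb E_{\pi^\star}\big[(\mathcal P^\star_{h\to h'}g)(S_h,\pi^\star_h(S_h))-(\mathcal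 P^\star_{h\to h'}g)(S_h,\pi_h(S_h))\big]\big|}{\|g\|_{h'}}\le\sqrt d\,\|c_h\|\,\frac{\|f_h-f^\star_h\|_h}{\|f^\star_h\|_h}.$$
   Context: Finite-horizon MDP: horizon $H\ge2$, state space $\mathcal S$, action space $\mathcal A$, kernels $P_h(\cdot\mid s,a)$ ($h<H$), known rewards $r_h$, initial distribution $\nu_1$; $J$, $\mathbb E_\pi$ as usual for the process $S_1\sim\nu_1$, $A_h\sim\pi_h(\cdot\mid S_h)$, $S_{h+1}\sim P_h(\cdot\mid S_h,A_h)$. $f(s,\pi_h(s)):=\int f(s,a)\pi_h(da\mid s)$; $(\mathcal P^\pi_hf)(s,a)=\int f(s',\pi_{h+1}(s'))P_h(ds'\mid s,a)$; $(\mathcal T^\star_hf)(s,a)=r_h(s,a)+\mathbb E[\max_{a'}f(S',a')]$, $S'\sim P_h(\cdot\mid s,a)$. $f^\star_H=r_H$, $f^\star_h=\mathcal T^\star_hf^\star_{h+1}$; $\pi^\star$ optimal and greedy w.r.t. $\boldsymbol f^\star$; $\mathcal P^\star_h=\mathcal P^{\pi^\star}_h$, $\mathcal P^\star_{h\to h'}=\mathcal P^\star_h\cdots\mathcal P^\star_{h'-1}$ ($h<h'$), identity for $h=h'$. Greedy policy of $\boldsymbol f$: $\pi_h(s)\in\arg\max_af_h(s,a)$, assumed unique and deterministic. Linear setting: feature map $\phi:\mathcal S\times\mathcal A\to\mathbb R^d$ with $\|\phi(s,a)\|_2\le1$; $\mathcal F=\{f_w=\langle\phi(\cdot),w\rangle:w\in\mathbb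 R^d\}$ (so $\partial\mathcal F=\mathcal F$), assumed to satisfy $\mathcal T^\pi_h\mathcal F\subseteq\mathcal F$ ($\mathcal T^\pi_hf=r_h+\mathcal P^\pi_hf$) for greedy policies $\pi$ of elements of $\mathcal F^H$, and $f^\star_h\in\mathcal F$. $\Sigma_h=\mathbb E_{\pi^\star}[\phi(S_h,A_h)\phi(S_h,A_h)^\top]$ is positive definite; $\|f\|_h=\sqrt{\mathbb E_{\pi^\star}[f(S_h,A_h)^2]}$, so $\|f_w\|_h=\|w\|_{\Sigma_h}=\sqrt{w^\top\Sigma_hw}$; $\|f^\star_h\|_h>0$. Curvature assumption: there are functions $c_h:\mathcal S\to[0,\infty)$ such that for every $h$, every $f_h\in\mathcal F$ with greedy $\pi_h$, and every $s$: (Curv1) $\|\phi(s,\pi_h(s))-\phi(s,\pi^\star_h(s))\|_{\Sigma_h^{-1}}\le c_h(s)\sqrt d\,\|f_h-f^\star_h\|_h/\|f^\star_h\|_h$; (Curv2) $f_h(s,\pi_h(s))-f_h(s,\pi^\star_h(s))\le c_h(s)\sqrt d\,\|f^\star_h\|_h\,(\|f_h-f^\star_h\|_h/\|f^\star_h\|_h)^2$. Here $\|c_h\|:=\sqrt{\mathbb E_{\nu_1,\pi^\star}[c_h(S_h)^2]}$. *)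

theory Defs
  imports "HOL-Analysis.Analysis" "HOL-Probability.Probability"
begin

definition fw :: "('s \<Rightarrow> 'a \<Rightarrow> real^'d) \<Rightarrow> real^'d \<Rightarrow> 's \<Rightarrow> 'a \<Rightarrow> real" where
  "fw \<phi> w = (\<lambda>s a. \<phi> s a \<bullet> w)"

definition greedy_at :: "'s measure \<Rightarrow> 'a measure \<Rightarrow> ('s \<Rightarrow> 'a \<Rightarrow> real) \<Rightarrow> ('s \<Rightarrow> 'a) \<Rightarrow> bool" where
  "greedy_at S A f p \<longleftrightarrow> p \<in> S \<rightarrow>\<^sub>M A \<and>
     (\<forall>s\<in>space S. p s \<in> space A \<and> (\<forall>a\<in>space A. f s a \<le> f s (p s)))"

definition Tstar :: "'a measure \<Rightarrow> (nat \<Rightarrow> 's \<Rightarrow> 'a \<Rightarrow> 's measure) \<Rightarrow> (nat \<Rightarrow> 's \<Rightarrow> 'a \<Rightarrow> real)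
     \<Rightarrow> nat \<Rightarrow> ('s \<Rightarrow> 'a \<Rightarrow> real) \<Rightarrow> 's \<Rightarrow> 'a \<Rightarrow> real" where
  "Tstar A P r h f = (\<lambda>s a. r h s a + (\<integral>s'. (SUP a'\<in>space A. f s' a') \<partial>(P h s a)))"

text \<open>fstar_aux k = f*_{H-k}\<close>
primrec fstar_aux :: "'a measure \<Rightarrow> (nat \<Rightarrow> 's \<Rightarrow> 'a \<Rightarrow> 's measure) \<Rightarrow> (nat \<Rightarrow> 's \<Rightarrow> 'a \<Rightarrow> real)
     \<Rightarrow> nat \<Rightarrow> nat \<Rightarrow> 's \<Rightarrow> 'a \<Rightarrow> real" where
  "fstar_aux A P r H 0 = r H"
| "fstar_aux A P r H (Suc k) = Tstar A P r (H - Suc k) (fstar_aux A P r H k)"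

text \<open>f*_h  (f*_H = r_H, f*_h = T*_h f*_{h+1}), for 1 <= h <= H\<close>
definition fstar :: "'a measure \<Rightarrow> (nat \<Rightarrow> 's \<Rightarrow> 'a \<Rightarrow> 's measure) \<Rightarrow> (nat \<Rightarrow> 's \<Rightarrow> 'a \<Rightarrow> real)
     \<Rightarrow> nat \<Rightarrow> nat \<Rightarrow> 's \<Rightarrow> 'a \<Rightarrow> real" where
  "fstar A P r H h = fstar_aux A P r H (H - h)"

text \<open>smu k = law of S_{k+1} under pi* (S_1 ~ nu_1, S_{h+1} ~ P_h(.|S_h, pi*_h(S_h)))\<close>
primrec smu :: "'s measure \<Rightarrow> (nat \<Rightarrow> 's \<Rightarrow> 'a \<Rightarrow> 's measure) \<Rightarrow> (nat \<Rightarrow> 's \<Rightarrow> 'a) \<Rightarrow> nat \<Rightarrow> 's measure" where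
  "smu \<nu> P \<pi> 0 = \<nu>"
| "smu \<nu> P \<pi> (Suc k) = bind (smu \<nu> P \<pi> k) (\<lambda>s. P (Suc k) s (\<pi> (Suc k) s))"

definition mu :: "'s measure \<Rightarrow> (nat \<Rightarrow> 's \<Rightarrow> 'a \<Rightarrow> 's measure) \<Rightarrow> (nat \<Rightarrow> 's \<Rightarrow> 'a) \<Rightarrow> nat \<Rightarrow> 's measure" where
  "mu \<nu> P \<pi> h = smu \<nu> P \<pi> (h - 1)"

definition hnorm :: "'s measure \<Rightarrow> (nat \<Rightarrow> 's \<Rightarrow> 'a \<Rightarrow> 's measure) \<Rightarrow> (nat \<Rightarrow> 's \<Rightarrow> 'a) \<Rightarrow> nat
     \<Rightarrow> ('s \<Rightarrow> 'a \<Rightarrow> real) \<Rightarrow> real" where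
  "hnorm \<nu> P \<pi> h f = sqrt (\<integral>s. (f s (\<pi> h s))\<^sup>2 \<partial>(mu \<nu> P \<pi> h))"

definition cnorm :: "'s measure \<Rightarrow> (nat \<Rightarrow> 's \<Rightarrow> 'a \<Rightarrow> 's measure) \<Rightarrow> (nat \<Rightarrow> 's \<Rightarrow> 'a) \<Rightarrow> nat
     \<Rightarrow> ('s \<Rightarrow> real) \<Rightarrow> real" where
  "cnorm \<nu> P \<pi> h c = sqrt (\<integral>s. (c s)\<^sup>2 \<partial>(mu \<nu> P \<pi> h))"

definition Sigma :: "'s measure \<Rightarrow> (nat \<Rightarrow> 's \<Rightarrow> 'a \<Rightarrow> 's measure) \<Rightarrow> (nat \<Rightarrow> 's \<Rightarrow> 'a)
     \<Rightarrow> ('s \<Rightarrow> 'a \<Rightarrow> real^'d) \<Rightarrow> nat \<Rightarrow> real^'d^'d" where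
  "Sigma \<nu> P \<pi> \<phi> h = (\<chi> i j. \<integral>s. (\<phi> s (\<pi> h s)) $ i * (\<phi> s (\<pi> h s)) $ j \<partial>(mu \<nu> P \<pi> h))"

definition qnorm :: "real^'d^'d \<Rightarrow> real^'d \<Rightarrow> real" where
  "qnorm M x = sqrt (x \<bullet> (M *v x))"

definition Ppol :: "(nat \<Rightarrow> 's \<Rightarrow> 'a \<Rightarrow> 's measure) \<Rightarrow> (nat \<Rightarrow> 's \<Rightarrow> 'a) \<Rightarrow> nat
     \<Rightarrow> ('s \<Rightarrow> 'a \<Rightarrow> real) \<Rightarrow> 's \<Rightarrow> 'a \<Rightarrow> real" where
  "Ppol P \<pi> h g = (\<lambda>s a. \<integral>s'. g s' (\<pi> (Suc h) s') \<partial>(P h s a))"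

text \<open>Pchain P pi h k = P^pi_h P^pi_{h+1} ... P^pi_{h+k-1}; so P*_{h->h'} = Pchain P pi* h (h'-h)\<close>
primrec Pchain :: "(nat \<Rightarrow> 's \<Rightarrow> 'a \<Rightarrow> 's measure) \<Rightarrow> (nat \<Rightarrow> 's \<Rightarrow> 'a) \<Rightarrow> nat \<Rightarrow> nat
     \<Rightarrow> ('s \<Rightarrow> 'a \<Rightarrow> real) \<Rightarrow> 's \<Rightarrow> 'a \<Rightarrow> real" where
  "Pchain P \<pi> h 0 g = g"
| "Pchain P \<pi> h (Suc k) g = Ppol P \<pi> h (Pchain P \<pi> (Suc h) k g)"

definition dh :: "'a measure \<Rightarrow> 's measure \<Rightarrow> (nat \<Rightarrow> 's \<Rightarrow> 'a \<Rightarrow> 's measure) \<Rightarrow> (nat \<Rightarrow> 's \<Rightarrow> 'a \<Rightarrow> real)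
     \<Rightarrow> nat \<Rightarrow> (nat \<Rightarrow> 's \<Rightarrow> 'a) \<Rightarrow> (nat \<Rightarrow> 's \<Rightarrow> real) \<Rightarrow> 'd itself \<Rightarrow> nat
     \<Rightarrow> ('s \<Rightarrow> 'a \<Rightarrow> real) \<Rightarrow> ('s \<Rightarrow> 'a \<Rightarrow> real) \<Rightarrow> real" where
  "dh A \<nu> P r H \<pi> c (_::'d itself) h f f' =
     sqrt (real CARD('d)) * cnorm \<nu> P \<pi> h (c h) / hnorm \<nu> P \<pi> h (fstar A P r H h)
       * hnorm \<nu> P \<pi> h (\<lambda>s a. f s a - f' s a)"

end

theory Submission
  imports Defs "HOL-Analysis.Harmonic_Numbers"
begin

(*
  On the linear class the stage norm is a quadratic form, ||f_w||_h = ||w||_{Sigma_h}.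
  (Curv1) together with the duality |x . v| <= ||x||_{Sigma_h^-1} ||v||_{Sigma_h} bounds the
  change of g(s, .) caused by replacing pi*_h by a greedy policy pi_h by
  c_h(s) sqrt d ||f_h - f*_h||_h / ||f*_h||_h ||g||_h; integrating against the law of S_h
  turns c_h(s) into ||c_h|| and hence gives d_h(f_h, f*_h) ||g||_h. Jensen's inequality along
  the transition kernel, ||P*_h g||_h <= ||g||_{h+1}, carries this bound back one step for (a)
  and along the chain P*_{h->h'} for (c). For (b), T*_h f - T*_h f* is a P*_h-average of the
  value gap of the greedy policy, which (Curv2) bounds by d_{h+1} ||f - f*||_{h+1}, plus
  f - f* itself; so kappa_h = 1 + rho_{h+1} works, and since a harmonic sum is at most ln H
  the constraints on rho give sum rho_h <= 1, whence every product of the kappa_h is at most e.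
*)

lemma quadratic_nonneg_imp_discriminant_le:
  fixes a b c :: real
  assumes nonneg: "\<And>t. 0 \<le> a + 2 * t * b + t\<^sup>2 * c" and "0 \<le> c"
  shows "b\<^sup>2 \<le> a * c"
proof (cases "c = 0")
  case True
  show ?thesis
  proof (rule ccontr)
    assume "\<not> ?thesis"
    then have "b \<noteq> 0" using True by simp
    then have "2 * (- (a + 1) / (2 * b)) * b = - (a + 1)" by simp
    then show False using nonneg[of "- (a + 1) / (2 * b)"] True by simp
  qed
next
  case False
  with \<open>0 \<le> c\<close> have "0 < c" by simp
  have "0 \<le> a + 2 * (- b / c) * b + (- b / c)\<^sup>2 * c" by (rule nonneg)
  also have "\<dots> = a - b\<^sup>2 / c" using \<open>0 < c\<close> by (simp add: field_simps power2_eq_square)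
  finally show ?thesis using \<open>0 < c\<close> by (simp add: field_simps)
qed

lemma sqrt_add_le_of_square_le_mult:
  fixes a b c :: real
  assumes "b\<^sup>2 \<le> a * c" "0 \<le> a" "0 \<le> c"
  shows "sqrt (a + 2 * b + c) \<le> sqrt a + sqrt c"
proof -
  have "b \<le> sqrt a * sqrt c"
    using assms real_le_rsqrt[of b "a * c"] by (simp add: real_sqrt_mult)
  then have "a + 2 * b + c \<le> (sqrt a + sqrt c)\<^sup>2"
    using assms by (simp add: power2_sum)
  then show ?thesis
    by (rule real_le_lsqrt[rotated]) (use assms in simp)
qed

lemma integrable_mult_of_square_integrable:
  fixes f g :: "'a \<Rightarrow> real"
  assumes [measurable]: "f \<in> borel_measurable M" "g \<in> borel_measurable M"
    and "integrable M (\<lambda>x. (f x)\<^sup>2)" "integrable M (\<lambda>x. (g x)\<^sup>2)"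
  shows "integrable M (\<lambda>x. f x * g x)"
proof (rule Bochner_Integration.integrable_bound)
  show "integrable M (\<lambda>x. (f x)\<^sup>2 + (g x)\<^sup>2)" using assms(3,4) by simp
  have "\<bar>f x * g x\<bar> \<le> (f x)\<^sup>2 + (g x)\<^sup>2" for x
  proof -
    have "\<bar>f x * g x\<bar> \<le> 2 * \<bar>f x * g x\<bar>" by simp
    also have "\<dots> \<le> (f x)\<^sup>2 + (g x)\<^sup>2"
      using zero_le_power2[of "\<bar>f x\<bar> - \<bar>g x\<bar>"] by (simp add: abs_mult power2_eq_square algebra_simps)
    finally show ?thesis .
  qed
  then show "AE x in M. norm (f x * g x) \<le> norm ((f x)\<^sup>2 + (g x)\<^sup>2)"
    by simp
qed simp

lemma Cauchy_Schwarz_integral: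
  fixes f g :: "'a \<Rightarrow> real"
  assumes [measurable]: "f \<in> borel_measurable M" "g \<in> borel_measurable M"
    and f2: "integrable M (\<lambda>x. (f x)\<^sup>2)" and g2: "integrable M (\<lambda>x. (g x)\<^sup>2)"
  shows "(\<integral>x. f x * g x \<partial>M)\<^sup>2 \<le> (\<integral>x. (f x)\<^sup>2 \<partial>M) * (\<integral>x. (g x)\<^sup>2 \<partial>M)"
proof (rule quadratic_nonneg_imp_discriminant_le)
  have fg: "integrable M (\<lambda>x. f x * g x)"
    by (rule integrable_mult_of_square_integrable) (use assms in auto)
  fix t :: real
  have "(\<lambda>x. (f x + t * g x)\<^sup>2) = (\<lambda>x. (f x)\<^sup>2 + 2 * t * (f x * g x) + t\<^sup>2 * (g x)\<^sup>2)"
    by (auto simp: power2_eq_square algebra_simps)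
  then have "(\<integral>x. (f x + t * g x)\<^sup>2 \<partial>M)
      = (\<integral>x. (f x)\<^sup>2 \<partial>M) + 2 * t * (\<integral>x. f x * g x \<partial>M) + t\<^sup>2 * (\<integral>x. (g x)\<^sup>2 \<partial>M)"
    using f2 g2 fg by simp
  moreover have "0 \<le> (\<integral>x. (f x + t * g x)\<^sup>2 \<partial>M)" by simp
  ultimately show "0 \<le> (\<integral>x. (f x)\<^sup>2 \<partial>M) + 2 * t * (\<integral>x. f x * g x \<partial>M) + t\<^sup>2 * (\<integral>x. (g x)\<^sup>2 \<partial>M)"
    by linarith
qed simp

lemma sqrt_integral_square_add_le:
  fixes f g :: "'a \<Rightarrow> real"
  assumes [measurable]: "f \<in> borel_measurable M" "g \<in> borel_measurable M"
    and f2: "integrable M (\<lambda>x. (f x)\<^sup>2)" and g2: "integrable M (\<lambda>x. (g x)\<^sup>2)"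
  shows "sqrt (\<integral>x. (f x + g x)\<^sup>2 \<partial>M) \<le> sqrt (\<integral>x. (f x)\<^sup>2 \<partial>M) + sqrt (\<integral>x. (g x)\<^sup>2 \<partial>M)"
proof -
  have fg: "integrable M (\<lambda>x. f x * g x)"
    by (rule integrable_mult_of_square_integrable) (use assms in auto)
  have "(\<lambda>x. (f x + g x)\<^sup>2) = (\<lambda>x. (f x)\<^sup>2 + 2 * (f x * g x) + (g x)\<^sup>2)"
    by (auto simp: power2_eq_square algebra_simps)
  then have "(\<integral>x. (f x + g x)\<^sup>2 \<partial>M)
      = (\<integral>x. (f x)\<^sup>2 \<partial>M) + 2 * (\<integral>x. f x * g x \<partial>M) + (\<integral>x. (g x)\<^sup>2 \<partial>M)"
    using f2 g2 fg by simp
  also have "sqrt \<dots> \<le> sqrt (\<integral>x. (f x)\<^sup>2 \<partial>M) + sqrt (\<integral>x. (g x)\<^sup>2 \<partial>M)"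
    by (rule sqrt_add_le_of_square_le_mult[OF Cauchy_Schwarz_integral[OF assms]]) simp_all
  finally show ?thesis .
qed

lemma integrable_bounded_measurable:
  fixes g :: "'a \<Rightarrow> real"
  assumes "finite_measure M" and "sets M = sets S"
    and "g \<in> borel_measurable S" and "\<And>x. x \<in> space S \<Longrightarrow> \<bar>g x\<bar> \<le> C"
  shows "integrable M g"
proof (rule finite_measure.integrable_const_bound[OF assms(1)])
  show "AE x in M. norm (g x) \<le> C"
    using assms(4) by (intro AE_I2) (simp add: sets_eq_imp_space_eq[OF assms(2)])
  show "g \<in> borel_measurable M"
    unfolding measurable_cong_sets[OF assms(2) refl] by (rule assms(3))
qed

lemma (in prob_space) square_integral_le_integral_square:
  fixes f :: "'a \<Rightarrow> real"
  assumes [measurable]: "f \<in> borel_measurable M" and "integrable M (\<lambda>x. (f x)\<^sup>2)"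
  shows "(\<integral>x. f x \<partial>M)\<^sup>2 \<le> (\<integral>x. (f x)\<^sup>2 \<partial>M)"
proof -
  have "(\<integral>x. f x * 1 \<partial>M)\<^sup>2 \<le> (\<integral>x. (f x)\<^sup>2 \<partial>M) * (\<integral>x. 1\<^sup>2 \<partial>M)"
    by (rule Cauchy_Schwarz_integral) (simp_all add: assms)
  then show ?thesis by (simp add: prob_space)
qed

lemma (in prob_space) abs_integral_le_sqrt_integral_square:
  fixes f :: "'a \<Rightarrow> real"
  assumes "f \<in> borel_measurable M" and "integrable M (\<lambda>x. (f x)\<^sup>2)"
  shows "\<bar>\<integral>x. f x \<partial>M\<bar> \<le> sqrt (\<integral>x. (f x)\<^sup>2 \<partial>M)"
proof -
  have "\<bar>\<integral>x. f x \<partial>M\<bar>\<^sup>2 \<le> (\<integral>x. (f x)\<^sup>2 \<partial>M)"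
    using square_integral_le_integral_square[OF assms] by simp
  then show ?thesis by (rule real_le_rsqrt)
qed

lemma sqrt_integral_square_le_weighted:
  fixes G w :: "'a \<Rightarrow> real"
  assumes "integrable M (\<lambda>x. (w x)\<^sup>2)" and "0 \<le> X"
    and bound: "\<And>x. x \<in> space M \<Longrightarrow> \<bar>G x\<bar> \<le> w x * X"
  shows "sqrt (\<integral>x. (G x)\<^sup>2 \<partial>M) \<le> X * sqrt (\<integral>x. (w x)\<^sup>2 \<partial>M)"
proof -
  have "(\<integral>x. (G x)\<^sup>2 \<partial>M) \<le> (\<integral>x. X\<^sup>2 * (w x)\<^sup>2 \<partial>M)"
  proof (rule integral_mono')
    fix x assume "x \<in> space M"
    then have "\<bar>G x\<bar>\<^sup>2 \<le> (w x * X)\<^sup>2" by (rule power_mono[OF bound abs_ge_zero])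
    then show "(G x)\<^sup>2 \<le> X\<^sup>2 * (w x)\<^sup>2" by (simp add: power_mult_distrib mult.commute)
  qed (use assms in auto)
  then have "sqrt (\<integral>x. (G x)\<^sup>2 \<partial>M) \<le> sqrt (X\<^sup>2 * (\<integral>x. (w x)\<^sup>2 \<partial>M))"
    by simp
  then show ?thesis using \<open>0 \<le> X\<close> by (simp add: real_sqrt_mult)
qed

lemma abs_square_le_square: "\<bar>x\<bar> \<le> C \<Longrightarrow> \<bar>x\<^sup>2\<bar> \<le> (C::real)\<^sup>2"
  using power_mono[of "\<bar>x\<bar>" C 2] by simp

lemma (in prob_space) integral_square_bounds:
  fixes g :: "'a \<Rightarrow> real"
  assumes sets: "sets M = sets K" and g: "g \<in> borel_measurable K"
    and bounded: "\<And>x. x \<in> space K \<Longrightarrow> \<bar>g x\<bar> \<le> C"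
  shows "(\<integral>x. g x \<partial>M)\<^sup>2 \<le> (\<integral>x. (g x)\<^sup>2 \<partial>M)" and "(\<integral>x. (g x)\<^sup>2 \<partial>M) \<le> C\<^sup>2"
proof -
  have integrable: "integrable M (\<lambda>x. (g x)\<^sup>2)"
    using finite_measure sets borel_measurable_power[OF g] abs_square_le_square[OF bounded]
    by (rule integrable_bounded_measurable)
  show "(\<integral>x. g x \<partial>M)\<^sup>2 \<le> (\<integral>x. (g x)\<^sup>2 \<partial>M)"
    using g integrable unfolding measurable_cong_sets[OF sets refl, symmetric]
    by (rule square_integral_le_integral_square)
  show "(\<integral>x. (g x)\<^sup>2 \<partial>M) \<le> C\<^sup>2"
    using abs_square_le_square[OF bounded]
    by (intro integral_le_const[OF integrable] AE_I2) (auto simp: sets_eq_imp_space_eq[OF sets])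
qed

lemma integral_square_integral_bind_le:
  fixes g :: "'b \<Rightarrow> real"
  assumes M: "prob_space M" and N[measurable]: "N \<in> M \<rightarrow>\<^sub>M subprob_algebra K"
    and N_prob: "\<And>s. s \<in> space M \<Longrightarrow> prob_space (N s)"
    and g[measurable]: "g \<in> borel_measurable K" and bounded: "\<And>x. x \<in> space K \<Longrightarrow> \<bar>g x\<bar> \<le> C"
  shows "(\<integral>s. (\<integral>x. g x \<partial>N s)\<^sup>2 \<partial>M) \<le> (\<integral>x. (g x)\<^sup>2 \<partial>(M \<bind> N))"
proof -
  interpret M: prob_space M by (fact M)
  note inner = prob_space.integral_square_bounds[OF N_prob sets_kernel[OF N] g bounded]
  have "(\<integral>s. (\<integral>x. g x \<partial>N s)\<^sup>2 \<partial>M) \<le> (\<integral>s. (\<integral>x. (g x)\<^sup>2 \<partial>N s) \<partial>M)"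
  proof (rule integral_mono')
    show "integrable M (\<lambda>s. \<integral>x. (g x)\<^sup>2 \<partial>N s)"
      by (rule M.integrable_const_bound[where B="C\<^sup>2"]) (use inner in \<open>auto intro!: AE_I2\<close>)
  qed (use inner in auto)
  also have "\<dots> = (\<integral>x. (g x)\<^sup>2 \<partial>(M \<bind> N))"
  proof (rule integral_bind[symmetric, where B'=1])
    show "AE s in M. emeasure (N s) (space (N s)) \<le> ennreal 1"
      using N_prob by (intro AE_I2) (simp add: prob_space.emeasure_space_1)
  qed (use abs_square_le_square[OF bounded] in auto)
  finally show ?thesis .
qed

lemma Cauchy_Schwarz_qnorm:
  fixes M :: "real^'n^'n"
  assumes symmetric: "transpose M = M" and psd: "\<And>x. 0 \<le> x \<bullet> (M *v x)"
  shows "\<bar>a \<bullet> (M *v b)\<bar> \<le> qnorm M a * qnorm M b"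
proof -
  have swap: "b \<bullet> (M *v a) = a \<bullet> (M *v b)"
    by (metis dot_lmul_matrix inner_commute symmetric transpose_matrix_vector)
  have "(a \<bullet> (M *v b))\<^sup>2 \<le> (a \<bullet> (M *v a)) * (b \<bullet> (M *v b))"
  proof (rule quadratic_nonneg_imp_discriminant_le)
    fix t :: real
    have "(a + t *\<^sub>R b) \<bullet> (M *v (a + t *\<^sub>R b))
        = a \<bullet> (M *v a) + 2 * t * (a \<bullet> (M *v b)) + t\<^sup>2 * (b \<bullet> (M *v b))"
      using swap
      by (simp add: matrix_vector_right_distrib matrix_vector_mult_scaleR inner_add_left
          inner_add_right algebra_simps power2_eq_square)
    then show "0 \<le> a \<bullet> (M *v a) + 2 * t * (a \<bullet> (M *v b)) + t\<^sup>2 * (b \<bullet> (M *v b))"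
      using psd[of "a + t *\<^sub>R b"] by simp
  qed (rule psd)
  then have "sqrt ((a \<bullet> (M *v b))\<^sup>2) \<le> sqrt ((a \<bullet> (M *v a)) * (b \<bullet> (M *v b)))"
    by (rule real_sqrt_le_mono)
  then show ?thesis unfolding qnorm_def by (simp add: real_sqrt_mult)
qed

lemma abs_inner_le_qnorm_matrix_inv:
  fixes M :: "real^'n^'n"
  assumes symmetric: "transpose M = M" and pd: "\<And>x. x \<noteq> 0 \<Longrightarrow> 0 < x \<bullet> (M *v x)"
  shows "\<bar>x \<bullet> v\<bar> \<le> qnorm (matrix_inv M) x * qnorm M v"
proof -
  have psd: "0 \<le> x \<bullet> (M *v x)" for x
    using pd[of x] by (cases "x = 0") auto
  have "\<forall>x. M *v x = 0 \<longrightarrow> x = 0"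
    using pd by force
  then have "invertible M"
    using matrix_left_invertible_ker invertible_left_inverse by blast
  then have "M ** matrix_inv M = mat 1 \<and> matrix_inv M ** M = mat 1"
    unfolding invertible_def matrix_inv_def by (rule someI_ex)
  then have right_inverse: "M *v (matrix_inv M *v x) = x"
    by (simp add: matrix_vector_mul_assoc)
  define y where "y = matrix_inv M *v x"
  have "x \<bullet> v = v \<bullet> (M *v y)"
    using right_inverse by (simp add: y_def inner_commute)
  also have "\<dots> = y \<bullet> (M *v v)"
    by (metis dot_lmul_matrix inner_commute symmetric transpose_matrix_vector)
  finally have "\<bar>x \<bullet> v\<bar> \<le> qnorm M y * qnorm M v"
    using Cauchy_Schwarz_qnorm[OF symmetric psd, of y v] by simp
  moreover have "qnorm M y = qnorm (matrix_inv M) x"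
    unfolding qnorm_def y_def using right_inverse by (simp add: inner_commute)
  ultimately show ?thesis by simp
qed

lemma sum_inverse_from_two_le_ln: "(\<Sum>m=2..n. 1 / real m) \<le> ln (real n)"
proof (cases "n = 0")
  case False
  have "harm n - ln (real n) \<le> harm 1 - ln (real 1)"
    by (rule euler_mascheroni_sequence_decreasing) (use False in auto)
  moreover have "harm n = 1 + (\<Sum>m=2..n. 1 / real m)"
    using False by (simp add: harm_def sum.atLeast_Suc_atMost numeral_2_eq_2 divide_inverse)
  ultimately show ?thesis by (simp add: harm_def)
qed simp

lemma sum_inverse_reversed_le_ln: "(\<Sum>i\<in>{1..<H-1}. 1 / (real H - real i)) \<le> ln (real H)"
proof -
  have "(\<Sum>i\<in>{1..<H-1}. 1 / (real H - real i)) = (\<Sum>m=2..H-1. 1 / real m)"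
    by (rule sum.reindex_bij_witness[where i="\<lambda>m. H - m" and j="\<lambda>i. H - i"])
      (auto simp: of_nat_diff)
  also have "\<dots> \<le> ln (real (H - 1))" by (rule sum_inverse_from_two_le_ln)
  also have "\<dots> \<le> ln (real H)"
  proof (cases "2 \<le> H")
    case True
    then show ?thesis by (subst ln_le_cancel_iff) auto
  next
    case False
    then have "H = 0 \<or> H = 1" by auto
    then show ?thesis by auto
  qed
  finally show ?thesis .
qed

lemma sum_radii_le_one:
  fixes \<rho> :: "nat \<Rightarrow> real"
  assumes "2 \<le> H"
    and bound: "\<forall>h\<in>{1..H}. 0 < \<rho> h \<and> \<rho> h \<le> 1 / (2 * (real H - real h + 1))"
    and log_bound: "\<forall>h\<in>{2..H-1}. \<rho> h \<le> (1/2) * (1 / (real H - real h + 1)) * (1 / (1 + ln (real H)))"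
  shows "(\<Sum>i\<in>{1..<H}. \<rho> (i + 1)) \<le> 1"
proof -
  have "{1..<H} = insert (H - 1) {1..<H-1}" using \<open>2 \<le> H\<close> by auto
  then have "(\<Sum>i\<in>{1..<H}. \<rho> (i + 1)) = (\<Sum>i\<in>{1..<H-1}. \<rho> (i + 1)) + \<rho> H"
    using \<open>2 \<le> H\<close> by simp
  also have "(\<Sum>i\<in>{1..<H-1}. \<rho> (i + 1))
      \<le> (\<Sum>i\<in>{1..<H-1}. 1 / (2 * (1 + ln (real H))) * (1 / (real H - real i)))"
  proof (rule sum_mono)
    fix i assume "i \<in> {1..<H-1}"
    then have "\<rho> (i + 1) \<le> (1/2) * (1 / (real H - real (i + 1) + 1)) * (1 / (1 + ln (real H)))"
      using log_bound[rule_format, of "i + 1"] by auto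
    then show "\<rho> (i + 1) \<le> 1 / (2 * (1 + ln (real H))) * (1 / (real H - real i))"
      by (simp add: algebra_simps)
  qed
  also have "\<dots> \<le> 1 / (2 * (1 + ln (real H))) * ln (real H)"
    unfolding sum_distrib_left[symmetric]
    by (rule mult_left_mono[OF sum_inverse_reversed_le_ln]) (use \<open>2 \<le> H\<close> in simp)
  also have "\<rho> H \<le> 1 / 2"
    using bound[rule_format, of H] \<open>2 \<le> H\<close> by simp
  also have "1 / (2 * (1 + ln (real H))) * ln (real H) + 1 / 2 \<le> 1"
  proof -
    have "0 \<le> ln (real H)" using \<open>2 \<le> H\<close> by simp
    then show ?thesis by (simp add: field_simps)
  qed
  finally show ?thesis by simp
qed

lemma prod_one_plus_le_three:
  fixes \<rho> :: "nat \<Rightarrow> real"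
  assumes "2 \<le> H"
    and bound: "\<forall>h\<in>{1..H}. 0 < \<rho> h \<and> \<rho> h \<le> 1 / (2 * (real H - real h + 1))"
    and log_bound: "\<forall>h\<in>{2..H-1}. \<rho> h \<le> (1/2) * (1 / (real H - real h + 1)) * (1 / (1 + ln (real H)))"
    and "1 \<le> h" "h \<le> h'" "h' \<le> H"
  shows "(\<Prod>i\<in>{h..<h'}. 1 + \<rho> (i + 1)) \<le> 3"
proof -
  have nonneg: "0 \<le> \<rho> (i + 1)" if "i \<in> {1..<H}" for i
    using bound[rule_format, of "i + 1"] that by auto
  have "(\<Prod>i\<in>{h..<h'}. 1 + \<rho> (i + 1)) \<le> (\<Prod>i\<in>{h..<h'}. exp (\<rho> (i + 1)))"
    by (rule prod_mono) (use nonneg assms in \<open>auto intro: add_increasing simp: exp_ge_add_one_self\<close>)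
  also have "\<dots> = exp (\<Sum>i\<in>{h..<h'}. \<rho> (i + 1))"
    by (simp add: exp_sum)
  also have "\<dots> \<le> exp (\<Sum>i\<in>{1..<H}. \<rho> (i + 1))"
    by (subst exp_le_cancel_iff, rule sum_mono2) (use nonneg assms in auto)
  also have "\<dots> \<le> exp 1"
    using sum_radii_le_one[OF assms(1-3)] by simp
  also have "\<dots> \<le> 3"
    by (rule exp_le)
  finally show ?thesis .
qed

lemma Sigma_symmetric: "transpose (Sigma \<nu> P \<pi> \<phi> h) = Sigma \<nu> P \<pi> \<phi> h"
  unfolding Sigma_def transpose_def by (simp add: vec_eq_iff mult.commute)

lemma fw_diff: "fw \<phi> v s a - fw \<phi> v' s a = fw \<phi> (v - v') s a"
  unfolding fw_def by (simp add: inner_diff_right)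

lemma SUP_greedy:
  assumes "greedy_at S A f p" and "s \<in> space S"
  shows "(SUP a\<in>space A. f s a) = f s (p s)"
  using assms unfolding greedy_at_def by (intro cSup_eq_maximum) auto

lemma greedy_measurable: "greedy_at S A f p \<Longrightarrow> p \<in> S \<rightarrow>\<^sub>M A"
  unfolding greedy_at_def by (rule conjunct1)

lemma greedy_space: "greedy_at S A f p \<Longrightarrow> s \<in> space S \<Longrightarrow> p s \<in> space A"
  unfolding greedy_at_def by blast

lemma greedy_le: "greedy_at S A f p \<Longrightarrow> s \<in> space S \<Longrightarrow> a \<in> space A \<Longrightarrow> f s a \<le> f s (p s)"
  unfolding greedy_at_def by blast

lemma hnorm_nonneg: "0 \<le> hnorm \<nu> P \<pi> h f"
  unfolding hnorm_def by simp

lemma cnorm_nonneg: "0 \<le> cnorm \<nu> P \<pi> h c"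
  unfolding cnorm_def by simp

locale finite_horizon_mdp =
  fixes S :: "'s measure" and A :: "'a measure"
    and P :: "nat \<Rightarrow> 's \<Rightarrow> 'a \<Rightarrow> 's measure"
    and \<nu> :: "'s measure" and H :: nat
    and \<pi>s :: "nat \<Rightarrow> 's \<Rightarrow> 'a"
  assumes nu_prob: "prob_space \<nu>" and nu_sets: "sets \<nu> = sets S"
    and kernel: "\<forall>h\<in>{1..<H}. (\<forall>s\<in>space S. \<forall>a\<in>space A. prob_space (P h s a) \<and> sets (P h s a) = sets S)
                    \<and> (\<lambda>(s, a). P h s a) \<in> S \<Otimes>\<^sub>M A \<rightarrow>\<^sub>M subprob_algebra S"
    and policy_measurable: "\<And>h. h \<in> {1..H} \<Longrightarrow> \<pi>s h \<in> S \<rightarrow>\<^sub>M A"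
begin

abbreviation law :: "nat \<Rightarrow> 's measure" where
  "law \<equiv> mu \<nu> P \<pi>s"

lemma kernel_at:
  assumes "h \<in> {1..<H}" "s \<in> space S" "a \<in> space A"
  shows "prob_space (P h s a) \<and> sets (P h s a) = sets S"
  using bspec[OF conjunct1[OF bspec[OF kernel assms(1)]] assms(2)] assms(3) by (rule bspec)

lemma prob_space_P: "h \<in> {1..<H} \<Longrightarrow> s \<in> space S \<Longrightarrow> a \<in> space A \<Longrightarrow> prob_space (P h s a)"
  using kernel_at by (rule conjunct1)

lemma sets_P: "h \<in> {1..<H} \<Longrightarrow> s \<in> space S \<Longrightarrow> a \<in> space A \<Longrightarrow> sets (P h s a) = sets S"
  using kernel_at by (rule conjunct2)

lemma space_P: "h \<in> {1..<H} \<Longrightarrow> s \<in> space S \<Longrightarrow> a \<in> space A \<Longrightarrow> space (P h s a) = space S"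
  by (rule sets_eq_imp_space_eq[OF sets_P])

lemma policy_space: "h \<in> {1..H} \<Longrightarrow> s \<in> space S \<Longrightarrow> \<pi>s h s \<in> space A"
  by (rule measurable_space[OF policy_measurable])

lemma step_measurable:
  assumes "h \<in> {1..<H}"
  shows "(\<lambda>s. P h s (\<pi>s h s)) \<in> S \<rightarrow>\<^sub>M subprob_algebra S"
proof -
  have "(\<lambda>s. (s, \<pi>s h s)) \<in> S \<rightarrow>\<^sub>M S \<Otimes>\<^sub>M A"
    using policy_measurable[of h] assms by (auto intro!: measurable_Pair)
  moreover have "(\<lambda>(s, a). P h s a) \<in> S \<Otimes>\<^sub>M A \<rightarrow>\<^sub>M subprob_algebra S"
    using bspec[OF kernel assms] by (rule conjunct2)
  ultimately have "(\<lambda>(s, a). P h s a) \<circ> (\<lambda>s. (s, \<pi>s h s)) \<in> S \<rightarrow>\<^sub>M subprob_algebra S"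
    by (rule measurable_comp)
  then show ?thesis by (simp add: comp_def)
qed

lemma smu_prob_space_sets: "k < H \<Longrightarrow> prob_space (smu \<nu> P \<pi>s k) \<and> sets (smu \<nu> P \<pi>s k) = sets S"
proof (induction k)
  case 0
  then show ?case using nu_prob nu_sets by simp
next
  case (Suc k)
  then have prob: "prob_space (smu \<nu> P \<pi>s k)" and sets: "sets (smu \<nu> P \<pi>s k) = sets S" by auto
  have h: "Suc k \<in> {1..<H}" and h': "Suc k \<in> {1..H}" using Suc by auto
  have space: "space (smu \<nu> P \<pi>s k) = space S" using sets by (rule sets_eq_imp_space_eq)
  have step: "(\<lambda>s. P (Suc k) s (\<pi>s (Suc k) s)) \<in> smu \<nu> P \<pi>s k \<rightarrow>\<^sub>M subprob_algebra S"
    using step_measurable[OF h] measurable_cong_sets[OF sets refl] by blast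
  have step_prob: "prob_space (P (Suc k) s (\<pi>s (Suc k) s))"
    and step_sets: "sets (P (Suc k) s (\<pi>s (Suc k) s)) = sets S"
    if "s \<in> space (smu \<nu> P \<pi>s k)" for s
    using prob_space_P[OF h] sets_P[OF h] policy_space[OF h'] that unfolding space by auto
  have "prob_space (smu \<nu> P \<pi>s (Suc k))"
    unfolding smu.simps by (rule prob_space.prob_space_bind[OF prob AE_I2[OF step_prob] step])
  moreover have "sets (smu \<nu> P \<pi>s (Suc k)) = sets S"
    unfolding smu.simps by (rule sets_bind[OF step_sets prob_space.not_empty[OF prob]])
  ultimately show ?case ..
qed

lemma prob_space_law: "h \<in> {1..H} \<Longrightarrow> prob_space (law h)"
  unfolding mu_def using smu_prob_space_sets[of "h - 1"] by auto

lemma sets_law: "h \<in> {1..H} \<Longrightarrow> sets (law h) = sets S"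
  unfolding mu_def using smu_prob_space_sets[of "h - 1"] by auto

lemma space_law: "h \<in> {1..H} \<Longrightarrow> space (law h) = space S"
  by (rule sets_eq_imp_space_eq[OF sets_law])

lemma law_Suc: "h \<in> {1..<H} \<Longrightarrow> law (Suc h) = law h \<bind> (\<lambda>s. P h s (\<pi>s h s))"
  unfolding mu_def by (cases h) auto

lemma measurable_law: "h \<in> {1..H} \<Longrightarrow> f \<in> borel_measurable S \<Longrightarrow> f \<in> borel_measurable (law h)"
  unfolding measurable_cong_sets[OF sets_law refl] .

lemma integrable_law:
  fixes g :: "'s \<Rightarrow> real"
  assumes "h \<in> {1..H}" and "g \<in> borel_measurable S" and "\<And>s. s \<in> space S \<Longrightarrow> \<bar>g s\<bar> \<le> C"
  shows "integrable (law h) g"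
  using prob_space_law[OF assms(1)] sets_law[OF assms(1)] assms(2,3)
  by (rule integrable_bounded_measurable[OF prob_space.finite_measure])

lemma integrable_P:
  fixes g :: "'s \<Rightarrow> real"
  assumes "h \<in> {1..<H}" "s \<in> space S" "a \<in> space A"
    and "g \<in> borel_measurable S" and "\<And>x. x \<in> space S \<Longrightarrow> \<bar>g x\<bar> \<le> C"
  shows "integrable (P h s a) g"
  using prob_space_P[OF assms(1-3)] sets_P[OF assms(1-3)] assms(4,5)
  by (rule integrable_bounded_measurable[OF prob_space.finite_measure])

lemma integral_square_step_le:
  fixes g :: "'s \<Rightarrow> real"
  assumes h: "h \<in> {1..<H}" and "g \<in> borel_measurable S" and "\<And>x. x \<in> space S \<Longrightarrow> \<bar>g x\<bar> \<le> C"
  shows "(\<integral>s. (\<integral>x. g x \<partial>P h s (\<pi>s h s))\<^sup>2 \<partial>law h) \<le> (\<integral>x. (g x)\<^sup>2 \<partial>law (Suc h))"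
proof -
  have h': "h \<in> {1..H}" using h by simp
  have "(\<lambda>s. P h s (\<pi>s h s)) \<in> law h \<rightarrow>\<^sub>M subprob_algebra S"
    unfolding measurable_cong_sets[OF sets_law[OF h'] refl] by (rule step_measurable[OF h])
  moreover have "prob_space (P h s (\<pi>s h s))" if "s \<in> space (law h)" for s
    using that unfolding space_law[OF h'] by (intro prob_space_P[OF h] policy_space[OF h'])
  ultimately show ?thesis
    unfolding law_Suc[OF h] using assms(2,3)
    by (rule integral_square_integral_bind_le[OF prob_space_law[OF h']])
qed

lemma hnorm_cong:
  assumes "h \<in> {1..H}" and "\<And>s. s \<in> space S \<Longrightarrow> F s (\<pi>s h s) = G s (\<pi>s h s)"
  shows "hnorm \<nu> P \<pi>s h F = hnorm \<nu> P \<pi>s h G"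
proof -
  have "(\<integral>s. (F s (\<pi>s h s))\<^sup>2 \<partial>law h) = (\<integral>s. (G s (\<pi>s h s))\<^sup>2 \<partial>law h)"
    by (rule Bochner_Integration.integral_cong[OF refl]) (simp add: space_law[OF assms(1)] assms(2))
  then show ?thesis unfolding hnorm_def by simp
qed

lemma Ppol_cong:
  assumes "h \<in> {1..<H}" "s \<in> space S" "a \<in> space A"
    and "\<And>s'. s' \<in> space S \<Longrightarrow> F s' (\<pi> (Suc h) s') = G s' (\<pi> (Suc h) s')"
  shows "Ppol P \<pi> h F s a = Ppol P \<pi> h G s a"
  unfolding Ppol_def
  by (rule Bochner_Integration.integral_cong[OF refl]) (simp add: space_P[OF assms(1-3)] assms(4))

end

lemma dh_self: "dh A \<nu> P r H \<pi> c T h f f = 0"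
  unfolding dh_def hnorm_def by simp

lemma dh_nonneg: "0 \<le> dh A \<nu> P r H \<pi> c T h f g"
  unfolding dh_def
  by (intro mult_nonneg_nonneg divide_nonneg_nonneg real_sqrt_ge_zero hnorm_nonneg cnorm_nonneg) simp

lemma dh_commute: "dh A \<nu> P r H \<pi> c T h f g = dh A \<nu> P r H \<pi> c T h g f"
  unfolding dh_def hnorm_def by (simp add: power2_commute)

locale linear_mdp = finite_horizon_mdp S A P \<nu> H \<pi>s
  for S :: "'s measure" and A :: "'a measure" and P :: "nat \<Rightarrow> 's \<Rightarrow> 'a \<Rightarrow> 's measure"
    and \<nu> :: "'s measure" and H :: nat and \<pi>s :: "nat \<Rightarrow> 's \<Rightarrow> 'a" +
  fixes r :: "nat \<Rightarrow> 's \<Rightarrow> 'a \<Rightarrow> real" and \<phi> :: "'s \<Rightarrow> 'a \<Rightarrow> real^'d::finite"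
    and c :: "nat \<Rightarrow> 's \<Rightarrow> real"
  assumes phi_meas: "(\<lambda>(s, a). \<phi> s a) \<in> borel_measurable (S \<Otimes>\<^sub>M A)"
    and phi_bound: "\<forall>s\<in>space S. \<forall>a\<in>space A. norm (\<phi> s a) \<le> 1"
    and greedy_exists: "\<forall>w. \<exists>p. greedy_at S A (fw \<phi> w) p"
    and pistar_greedy: "\<forall>h\<in>{1..H}. greedy_at S A (fstar A P r H h) (\<pi>s h)"
    and fstar_in_F: "\<forall>h\<in>{1..H}. \<exists>w. \<forall>s\<in>space S. \<forall>a\<in>space A. fstar A P r H h s a = fw \<phi> w s a"
    and closure: "\<forall>W \<pi>. (\<forall>h\<in>{1..H}. greedy_at S A (fw \<phi> (W h)) (\<pi> h)) \<longrightarrow>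
                    (\<forall>h\<in>{1..<H}. \<forall>v. \<exists>v'. \<forall>s\<in>space S. \<forall>a\<in>space A.
                        r h s a + Ppol P \<pi> h (fw \<phi> v) s a = fw \<phi> v' s a)"
    and Sigma_pd: "\<forall>h\<in>{1..H}. \<forall>x. x \<noteq> 0 \<longrightarrow> x \<bullet> (Sigma \<nu> P \<pi>s \<phi> h *v x) > 0"
    and fstar_pos: "\<forall>h\<in>{1..H}. hnorm \<nu> P \<pi>s h (fstar A P r H h) > 0"
    and c_reg: "\<forall>h\<in>{1..H}. c h \<in> borel_measurable S \<and> (\<forall>s\<in>space S. c h s \<ge> 0)
                   \<and> integrable (mu \<nu> P \<pi>s h) (\<lambda>s. (c h s)\<^sup>2)"
    and curv: "\<forall>h\<in>{1..H}. \<forall>v p. greedy_at S A (fw \<phi> v) p \<longrightarrow> (\<forall>s\<in>space S.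
        qnorm (matrix_inv (Sigma \<nu> P \<pi>s \<phi> h)) (\<phi> s (p s) - \<phi> s (\<pi>s h s))
          \<le> c h s * sqrt (real CARD('d)) * hnorm \<nu> P \<pi>s h (\<lambda>s a. fw \<phi> v s a - fstar A P r H h s a)
               / hnorm \<nu> P \<pi>s h (fstar A P r H h)
      \<and> fw \<phi> v s (p s) - fw \<phi> v s (\<pi>s h s)
          \<le> c h s * sqrt (real CARD('d)) * hnorm \<nu> P \<pi>s h (fstar A P r H h)
             * (hnorm \<nu> P \<pi>s h (\<lambda>s a. fw \<phi> v s a - fstar A P r H h s a)
                  / hnorm \<nu> P \<pi>s h (fstar A P r H h))\<^sup>2)"
begin

abbreviation fs :: "nat \<Rightarrow> 's \<Rightarrow> 'a \<Rightarrow> real" where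
  "fs \<equiv> fstar A P r H"

lemmas norm_phi_le = phi_bound[rule_format]
lemmas greedy_fstar = pistar_greedy[rule_format]
lemmas fstar_linear = fstar_in_F[rule_format]
lemmas bellman_closed = closure[rule_format]
lemmas Sigma_pos_def = Sigma_pd[rule_format]
lemmas fstar_hnorm_pos = fstar_pos[rule_format]
lemmas curvature_feature = conjunct1[OF curv[rule_format]]
lemmas curvature_value = conjunct2[OF curv[rule_format]]

lemma c_square_integrable: "h \<in> {1..H} \<Longrightarrow> integrable (law h) (\<lambda>s. (c h s)\<^sup>2)"
  using c_reg by blast

lemma phi_policy_measurable:
  assumes "p \<in> S \<rightarrow>\<^sub>M A"
  shows "(\<lambda>s. \<phi> s (p s)) \<in> borel_measurable S"
proof -
  have "(\<lambda>s. (s, p s)) \<in> S \<rightarrow>\<^sub>M S \<Otimes>\<^sub>M A"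
    using assms by (auto intro!: measurable_Pair)
  then have "(\<lambda>(s, a). \<phi> s a) \<circ> (\<lambda>s. (s, p s)) \<in> borel_measurable S"
    using phi_meas by (rule measurable_comp)
  then show ?thesis by (simp add: comp_def)
qed

lemma fw_policy_measurable: "p \<in> S \<rightarrow>\<^sub>M A \<Longrightarrow> (\<lambda>s. fw \<phi> v s (p s)) \<in> borel_measurable S"
  unfolding fw_def by (rule borel_measurable_inner[OF phi_policy_measurable measurable_const]) simp_all

lemma abs_fw_le:
  assumes "s \<in> space S" "a \<in> space A"
  shows "\<bar>fw \<phi> v s a\<bar> \<le> norm v"
proof -
  have "\<bar>fw \<phi> v s a\<bar> \<le> norm (\<phi> s a) * norm v"
    unfolding fw_def by (rule Cauchy_Schwarz_ineq2)
  also have "\<dots> \<le> 1 * norm v"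
    by (rule mult_right_mono[OF norm_phi_le[OF assms]]) simp
  finally show ?thesis by simp
qed

lemma abs_fw_policy_le: "p \<in> S \<rightarrow>\<^sub>M A \<Longrightarrow> s \<in> space S \<Longrightarrow> \<bar>fw \<phi> u s (p s)\<bar> \<le> norm u"
  by (rule abs_fw_le[OF _ measurable_space])

lemma fw_gap_measurable:
  assumes "p \<in> S \<rightarrow>\<^sub>M A" "q \<in> S \<rightarrow>\<^sub>M A"
  shows "(\<lambda>s. fw \<phi> u s (p s) - fw \<phi> v s (q s)) \<in> borel_measurable S"
  using fw_policy_measurable[OF assms(1)] fw_policy_measurable[OF assms(2)] by (rule borel_measurable_diff)

lemma abs_fw_gap_le:
  assumes "p \<in> S \<rightarrow>\<^sub>M A" "q \<in> S \<rightarrow>\<^sub>M A" "s \<in> space S"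
  shows "\<bar>fw \<phi> u s (p s) - fw \<phi> v s (q s)\<bar> \<le> norm u + norm v"
  using abs_fw_le[OF assms(3) measurable_space[OF assms(1,3)], of u]
    abs_fw_le[OF assms(3) measurable_space[OF assms(2,3)], of v] by linarith

lemma quadratic_form_Sigma:
  assumes h: "h \<in> {1..H}"
  shows "u \<bullet> (Sigma \<nu> P \<pi>s \<phi> h *v u) = (\<integral>s. (fw \<phi> u s (\<pi>s h s))\<^sup>2 \<partial>law h)"
proof -
  let ?x = "\<lambda>i s. \<phi> s (\<pi>s h s) $ i"
  have measurable: "?x i \<in> borel_measurable S" for i
    using borel_measurable_inner[OF phi_policy_measurable[OF policy_measurable[OF h]] measurable_const,
        of "axis i 1"]
    by (simp add: inner_axis)
  have integrable: "integrable (law h) (\<lambda>s. ?x i s * ?x j s)" for i j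
  proof (rule integrable_law[OF h borel_measurable_times[OF measurable measurable]])
    fix s assume s: "s \<in> space S"
    have "\<bar>?x k s\<bar> \<le> 1" for k
      using component_le_norm_cart[of "\<phi> s (\<pi>s h s)" k] norm_phi_le[OF s policy_space[OF h s]] by simp
    then show "\<bar>?x i s * ?x j s\<bar> \<le> 1"
      by (simp add: abs_mult mult_le_one)
  qed
  have "(\<lambda>s. (fw \<phi> u s (\<pi>s h s))\<^sup>2) = (\<lambda>s. \<Sum>i\<in>UNIV. \<Sum>j\<in>UNIV. u $ i * u $ j * (?x i s * ?x j s))"
    by (auto simp: fw_def inner_vec_def power2_eq_square sum_product algebra_simps intro!: sum.cong)
  then have "(\<integral>s. (fw \<phi> u s (\<pi>s h s))\<^sup>2 \<partial>law h)
      = (\<Sum>i\<in>UNIV. \<Sum>j\<in>UNIV. u $ i * u $ j * (\<integral>s. ?x i s * ?x j s \<partial>law h))"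
    using integrable by simp
  also have "\<dots> = u \<bullet> (Sigma \<nu> P \<pi>s \<phi> h *v u)"
    unfolding Sigma_def
    by (simp add: inner_vec_def matrix_vector_mult_def sum_distrib_left algebra_simps)
  finally show ?thesis by simp
qed

lemma hnorm_fw: "h \<in> {1..H} \<Longrightarrow> hnorm \<nu> P \<pi>s h (fw \<phi> u) = qnorm (Sigma \<nu> P \<pi>s \<phi> h) u"
  unfolding hnorm_def qnorm_def by (simp add: quadratic_form_Sigma)

lemma Sigma_nonneg: "h \<in> {1..H} \<Longrightarrow> 0 \<le> x \<bullet> (Sigma \<nu> P \<pi>s \<phi> h *v x)"
  using Sigma_pos_def[of h x] by (cases "x = 0") auto

definition w_star :: "nat \<Rightarrow> real^'d" where
  "w_star h = (SOME w. \<forall>s\<in>space S. \<forall>a\<in>space A. fs h s a = fw \<phi> w s a)"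

lemma fstar_eq_fw: "h \<in> {1..H} \<Longrightarrow> s \<in> space S \<Longrightarrow> a \<in> space A \<Longrightarrow> fs h s a = fw \<phi> (w_star h) s a"
  using someI_ex[OF fstar_linear] unfolding w_star_def by blast

lemma greedy_w_star: "h \<in> {1..H} \<Longrightarrow> greedy_at S A (fw \<phi> (w_star h)) (\<pi>s h)"
  using greedy_fstar[of h] fstar_eq_fw[of h] unfolding greedy_at_def by (metis measurable_space)

lemma Ppol_fw_linear:
  assumes h: "h \<in> {1..<H}"
  shows "\<exists>u'. \<forall>s\<in>space S. \<forall>a\<in>space A. Ppol P \<pi>s h (fw \<phi> u) s a = fw \<phi> u' s a"
proof -
  \<comment> \<open>Closure is stated for the Bellman operator; applying it to \<open>f\<^sub>u\<close> and to \<open>f\<^sub>0\<close> cancels the reward.\<close>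
  obtain v1 where v1: "\<forall>s\<in>space S. \<forall>a\<in>space A. r h s a + Ppol P \<pi>s h (fw \<phi> u) s a = fw \<phi> v1 s a"
    using bellman_closed[of w_star \<pi>s h, OF greedy_w_star h] by blast
  obtain v0 where v0: "\<forall>s\<in>space S. \<forall>a\<in>space A. r h s a + Ppol P \<pi>s h (fw \<phi> 0) s a = fw \<phi> v0 s a"
    using bellman_closed[of w_star \<pi>s h, OF greedy_w_star h] by blast
  have zero: "Ppol P \<pi>s h (fw \<phi> 0) s a = 0" for s a
    unfolding Ppol_def fw_def by simp
  have "Ppol P \<pi>s h (fw \<phi> u) s a = fw \<phi> (v1 - v0) s a" if "s \<in> space S" "a \<in> space A" for s a
  proof -
    have "r h s a + Ppol P \<pi>s h (fw \<phi> u) s a = fw \<phi> v1 s a" "r h s a = fw \<phi> v0 s a"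
      using v1 v0 zero that by auto
    then show ?thesis unfolding fw_diff[symmetric] by linarith
  qed
  then show ?thesis by blast
qed

lemma Pchain_fw_linear:
  "1 \<le> h \<Longrightarrow> h + k \<le> H \<Longrightarrow> \<exists>u. \<forall>s\<in>space S. \<forall>a\<in>space A. Pchain P \<pi>s h k (fw \<phi> v) s a = fw \<phi> u s a"
proof (induction k arbitrary: h)
  case 0
  then show ?case by auto
next
  case (Suc k)
  then have h: "h \<in> {1..<H}" and h': "Suc h \<in> {1..H}" by auto
  obtain u1 where u1: "\<forall>s\<in>space S. \<forall>a\<in>space A. Pchain P \<pi>s (Suc h) k (fw \<phi> v) s a = fw \<phi> u1 s a"
    using Suc.IH[of "Suc h"] Suc.prems by auto
  obtain u2 where u2: "\<forall>s\<in>space S. \<forall>a\<in>space A. Ppol P \<pi>s h (fw \<phi> u1) s a = fw \<phi> u2 s a"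
    using Ppol_fw_linear[OF h] by blast
  have "Pchain P \<pi>s h (Suc k) (fw \<phi> v) s a = fw \<phi> u2 s a" if "s \<in> space S" "a \<in> space A" for s a
  proof -
    have "Pchain P \<pi>s h (Suc k) (fw \<phi> v) s a = Ppol P \<pi>s h (fw \<phi> u1) s a"
      unfolding Pchain.simps using u1 policy_space[OF h'] by (intro Ppol_cong[OF h that]) simp
    then show ?thesis using u2 that by simp
  qed
  then show ?case by blast
qed

lemma hnorm_Ppol_le:
  assumes h: "h \<in> {1..<H}"
  shows "hnorm \<nu> P \<pi>s h (Ppol P \<pi>s h (fw \<phi> u)) \<le> hnorm \<nu> P \<pi>s (Suc h) (fw \<phi> u)"
proof -
  have h': "Suc h \<in> {1..H}" using h by simp
  let ?g = "\<lambda>s. fw \<phi> u s (\<pi>s (Suc h) s)"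
  have "(\<integral>s. (\<integral>x. ?g x \<partial>P h s (\<pi>s h s))\<^sup>2 \<partial>law h) \<le> (\<integral>x. (?g x)\<^sup>2 \<partial>law (Suc h))"
    using fw_policy_measurable[OF policy_measurable[OF h']] abs_fw_le[OF _ policy_space[OF h']]
    by (rule integral_square_step_le[OF h])
  then show ?thesis
    unfolding hnorm_def Ppol_def by simp
qed

lemma hnorm_Pchain_le:
  "1 \<le> h \<Longrightarrow> h + k \<le> H \<Longrightarrow> hnorm \<nu> P \<pi>s h (Pchain P \<pi>s h k (fw \<phi> v)) \<le> hnorm \<nu> P \<pi>s (h + k) (fw \<phi> v)"
proof (induction k arbitrary: h)
  case 0
  then show ?case by simp
next
  case (Suc k)
  then have h: "h \<in> {1..<H}" and h1: "h \<in> {1..H}" and h': "Suc h \<in> {1..H}" by auto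
  obtain u where u: "\<forall>s\<in>space S. \<forall>a\<in>space A. Pchain P \<pi>s (Suc h) k (fw \<phi> v) s a = fw \<phi> u s a"
    using Pchain_fw_linear[of "Suc h" k v] Suc.prems by auto
  have "hnorm \<nu> P \<pi>s h (Pchain P \<pi>s h (Suc k) (fw \<phi> v)) = hnorm \<nu> P \<pi>s h (Ppol P \<pi>s h (fw \<phi> u))"
    unfolding Pchain.simps using u policy_space[OF h'] policy_space[OF h1]
    by (intro hnorm_cong[OF h1] Ppol_cong[OF h]) simp_all
  also have "\<dots> \<le> hnorm \<nu> P \<pi>s (Suc h) (fw \<phi> u)"
    by (rule hnorm_Ppol_le[OF h])
  also have "\<dots> = hnorm \<nu> P \<pi>s (Suc h) (Pchain P \<pi>s (Suc h) k (fw \<phi> v))"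
    using u policy_space[OF h'] by (intro hnorm_cong[OF h']) simp
  also have "\<dots> \<le> hnorm \<nu> P \<pi>s (h + Suc k) (fw \<phi> v)"
    using Suc.IH[of "Suc h"] Suc.prems by simp
  finally show ?case .
qed

lemma integrable_fw_gap_square:
  assumes "h \<in> {1..H}" "p \<in> S \<rightarrow>\<^sub>M A" "q \<in> S \<rightarrow>\<^sub>M A"
  shows "integrable (law h) (\<lambda>s. (fw \<phi> u s (p s) - fw \<phi> v s (q s))\<^sup>2)"
proof (rule integrable_law[OF assms(1) borel_measurable_power[OF fw_gap_measurable[OF assms(2,3)]]])
  fix s assume "s \<in> space S"
  then show "\<bar>(fw \<phi> u s (p s) - fw \<phi> v s (q s))\<^sup>2\<bar> \<le> (norm u + norm v)\<^sup>2"
    by (intro abs_square_le_square abs_fw_gap_le[OF assms(2,3)])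
qed

lemma abs_fw_greedy_gap_le:
  assumes h: "h \<in> {1..H}" and greedy: "greedy_at S A (fw \<phi> v) p" and s: "s \<in> space S"
  shows "\<bar>fw \<phi> u s (p s) - fw \<phi> u s (\<pi>s h s)\<bar>
    \<le> c h s * sqrt (real CARD('d)) * hnorm \<nu> P \<pi>s h (\<lambda>s a. fw \<phi> v s a - fs h s a)
         / hnorm \<nu> P \<pi>s h (fs h) * hnorm \<nu> P \<pi>s h (fw \<phi> u)"
proof -
  have "fw \<phi> u s (p s) - fw \<phi> u s (\<pi>s h s) = (\<phi> s (p s) - \<phi> s (\<pi>s h s)) \<bullet> u"
    unfolding fw_def by (simp add: inner_diff_left)
  then have "\<bar>fw \<phi> u s (p s) - fw \<phi> u s (\<pi>s h s)\<bar>
      \<le> qnorm (matrix_inv (Sigma \<nu> P \<pi>s \<phi> h)) (\<phi> s (p s) - \<phi> s (\<pi>s h s)) * qnorm (Sigma \<nu> P \<pi>s \<phi> h) u"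
    using abs_inner_le_qnorm_matrix_inv[OF Sigma_symmetric Sigma_pos_def[OF h]] by simp
  also have "\<dots> \<le> c h s * sqrt (real CARD('d)) * hnorm \<nu> P \<pi>s h (\<lambda>s a. fw \<phi> v s a - fs h s a)
         / hnorm \<nu> P \<pi>s h (fs h) * qnorm (Sigma \<nu> P \<pi>s \<phi> h) u"
    by (rule mult_right_mono[OF curvature_feature[OF h greedy s]]) (simp add: qnorm_def Sigma_nonneg[OF h])
  finally show ?thesis by (simp add: hnorm_fw[OF h])
qed

lemma greedy_policy_gap_L2_le:
  assumes h: "h \<in> {1..H}" and greedy: "greedy_at S A (fw \<phi> v) p"
  shows "sqrt (\<integral>s. (fw \<phi> u s (p s) - fw \<phi> u s (\<pi>s h s))\<^sup>2 \<partial>law h)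
    \<le> dh A \<nu> P r H \<pi>s c TYPE('d) h (fw \<phi> v) (fs h) * hnorm \<nu> P \<pi>s h (fw \<phi> u)"
proof -
  define X where "X = sqrt (real CARD('d)) * hnorm \<nu> P \<pi>s h (\<lambda>s a. fw \<phi> v s a - fs h s a)
    / hnorm \<nu> P \<pi>s h (fs h) * hnorm \<nu> P \<pi>s h (fw \<phi> u)"
  have "0 \<le> X"
    unfolding X_def by (intro mult_nonneg_nonneg divide_nonneg_nonneg hnorm_nonneg) simp
  have "sqrt (\<integral>s. (fw \<phi> u s (p s) - fw \<phi> u s (\<pi>s h s))\<^sup>2 \<partial>law h) \<le> X * cnorm \<nu> P \<pi>s h (c h)"
    unfolding cnorm_def
  proof (rule sqrt_integral_square_le_weighted[OF c_square_integrable[OF h] \<open>0 \<le> X\<close>])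
    fix s assume "s \<in> space (law h)"
    then show "\<bar>fw \<phi> u s (p s) - fw \<phi> u s (\<pi>s h s)\<bar> \<le> c h s * X"
      using abs_fw_greedy_gap_le[OF h greedy, of s u] by (simp add: X_def space_law[OF h] mult_ac)
  qed
  also have "X * cnorm \<nu> P \<pi>s h (c h) = dh A \<nu> P r H \<pi>s c TYPE('d) h (fw \<phi> v) (fs h) * hnorm \<nu> P \<pi>s h (fw \<phi> u)"
    unfolding X_def dh_def by (simp add: mult_ac)
  finally show ?thesis .
qed

lemma greedy_value_gap_L2_le:
  assumes h: "h \<in> {1..H}" and greedy: "greedy_at S A (fw \<phi> v) p"
  shows "sqrt (\<integral>s. (fw \<phi> v s (p s) - fw \<phi> v s (\<pi>s h s))\<^sup>2 \<partial>law h)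
    \<le> dh A \<nu> P r H \<pi>s c TYPE('d) h (fw \<phi> v) (fs h) * hnorm \<nu> P \<pi>s h (\<lambda>s a. fw \<phi> v s a - fs h s a)"
proof -
  define X where "X = sqrt (real CARD('d)) * hnorm \<nu> P \<pi>s h (fs h)
    * (hnorm \<nu> P \<pi>s h (\<lambda>s a. fw \<phi> v s a - fs h s a) / hnorm \<nu> P \<pi>s h (fs h))\<^sup>2"
  have "0 \<le> X"
    unfolding X_def by (intro mult_nonneg_nonneg hnorm_nonneg) simp_all
  have "sqrt (\<integral>s. (fw \<phi> v s (p s) - fw \<phi> v s (\<pi>s h s))\<^sup>2 \<partial>law h) \<le> X * cnorm \<nu> P \<pi>s h (c h)"
    unfolding cnorm_def
  proof (rule sqrt_integral_square_le_weighted[OF c_square_integrable[OF h] \<open>0 \<le> X\<close>])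
    fix s assume "s \<in> space (law h)"
    then have s: "s \<in> space S" by (simp add: space_law[OF h])
    have "0 \<le> fw \<phi> v s (p s) - fw \<phi> v s (\<pi>s h s)"
      using greedy_le[OF greedy s policy_space[OF h s]] by simp
    moreover have "fw \<phi> v s (p s) - fw \<phi> v s (\<pi>s h s) \<le> c h s * X"
      using curvature_value[OF h greedy s] by (simp add: X_def mult_ac)
    ultimately show "\<bar>fw \<phi> v s (p s) - fw \<phi> v s (\<pi>s h s)\<bar> \<le> c h s * X"
      by simp
  qed
  also have "X * cnorm \<nu> P \<pi>s h (c h)
      = dh A \<nu> P r H \<pi>s c TYPE('d) h (fw \<phi> v) (fs h) * hnorm \<nu> P \<pi>s h (\<lambda>s a. fw \<phi> v s a - fs h s a)"
    using fstar_hnorm_pos[OF h] unfolding X_def dh_def by (simp add: power2_eq_square field_simps)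
  finally show ?thesis .
qed

lemma hnorm_fw_triangle:
  assumes h: "h \<in> {1..H}"
  shows "hnorm \<nu> P \<pi>s h (\<lambda>s a. fw \<phi> v1 s a - fw \<phi> v3 s a)
    \<le> hnorm \<nu> P \<pi>s h (\<lambda>s a. fw \<phi> v1 s a - fw \<phi> v2 s a) + hnorm \<nu> P \<pi>s h (\<lambda>s a. fw \<phi> v2 s a - fw \<phi> v3 s a)"
proof -
  let ?f = "\<lambda>s. fw \<phi> v1 s (\<pi>s h s) - fw \<phi> v2 s (\<pi>s h s)"
  let ?g = "\<lambda>s. fw \<phi> v2 s (\<pi>s h s) - fw \<phi> v3 s (\<pi>s h s)"
  have "hnorm \<nu> P \<pi>s h (\<lambda>s a. fw \<phi> v1 s a - fw \<phi> v3 s a) = sqrt (\<integral>s. (?f s + ?g s)\<^sup>2 \<partial>law h)"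
    unfolding hnorm_def by simp
  also have "\<dots> \<le> sqrt (\<integral>s. (?f s)\<^sup>2 \<partial>law h) + sqrt (\<integral>s. (?g s)\<^sup>2 \<partial>law h)"
    using policy_measurable[OF h]
    by (intro sqrt_integral_square_add_le measurable_law[OF h] fw_gap_measurable integrable_fw_gap_square[OF h])
  finally show ?thesis
    unfolding hnorm_def .
qed

lemma dh_fw_triangle:
  assumes "h \<in> {1..H}"
  shows "dh A \<nu> P r H \<pi>s c TYPE('d) h (fw \<phi> v1) (fw \<phi> v3)
    \<le> dh A \<nu> P r H \<pi>s c TYPE('d) h (fw \<phi> v1) (fw \<phi> v2) + dh A \<nu> P r H \<pi>s c TYPE('d) h (fw \<phi> v2) (fw \<phi> v3)"
proof -
  have "0 \<le> sqrt (real CARD('d)) * cnorm \<nu> P \<pi>s h (c h) / hnorm \<nu> P \<pi>s h (fs h)"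
    by (intro mult_nonneg_nonneg divide_nonneg_nonneg cnorm_nonneg hnorm_nonneg) simp
  from mult_left_mono[OF hnorm_fw_triangle[OF assms] this] show ?thesis
    unfolding dh_def by (simp add: distrib_left)
qed

lemma hnorm_Ppol_greedy_diff_le:
  assumes h: "h \<in> {1..<H}" and greedy: "greedy_at S A (fw \<phi> w) (\<pi> (Suc h))"
  shows "hnorm \<nu> P \<pi>s h (\<lambda>s a. Ppol P \<pi> h (fw \<phi> v) s a - Ppol P \<pi>s h (fw \<phi> v) s a)
    \<le> dh A \<nu> P r H \<pi>s c TYPE('d) (Suc h) (fw \<phi> w) (fs (Suc h)) * hnorm \<nu> P \<pi>s (Suc h) (fw \<phi> v)"
proof -
  have h1: "h \<in> {1..H}" and h': "Suc h \<in> {1..H}" using h by auto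
  have pm: "\<pi> (Suc h) \<in> S \<rightarrow>\<^sub>M A" by (rule greedy_measurable[OF greedy])
  have psm: "\<pi>s (Suc h) \<in> S \<rightarrow>\<^sub>M A" by (rule policy_measurable[OF h'])
  let ?g = "\<lambda>s'. fw \<phi> v s' (\<pi> (Suc h) s') - fw \<phi> v s' (\<pi>s (Suc h) s')"
  have step: "Ppol P \<pi> h (fw \<phi> v) s (\<pi>s h s) - Ppol P \<pi>s h (fw \<phi> v) s (\<pi>s h s) = (\<integral>x. ?g x \<partial>P h s (\<pi>s h s))"
    if s: "s \<in> space S" for s
    unfolding Ppol_def
    using integrable_P[OF h s policy_space[OF h1 s] fw_policy_measurable[OF pm] abs_fw_policy_le[OF pm]]
      integrable_P[OF h s policy_space[OF h1 s] fw_policy_measurable[OF psm] abs_fw_policy_le[OF psm]]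
    by (rule Bochner_Integration.integral_diff[symmetric])
  have "hnorm \<nu> P \<pi>s h (\<lambda>s a. Ppol P \<pi> h (fw \<phi> v) s a - Ppol P \<pi>s h (fw \<phi> v) s a)
      = sqrt (\<integral>s. (\<integral>x. ?g x \<partial>P h s (\<pi>s h s))\<^sup>2 \<partial>law h)"
    unfolding hnorm_def
    by (rule arg_cong[where f=sqrt], rule Bochner_Integration.integral_cong[OF refl])
      (simp add: step space_law[OF h1])
  also have "\<dots> \<le> sqrt (\<integral>x. (?g x)\<^sup>2 \<partial>law (Suc h))"
    using fw_gap_measurable[OF pm psm] abs_fw_gap_le[OF pm psm]
    by (intro real_sqrt_le_mono integral_square_step_le[OF h])
  also have "\<dots> \<le> dh A \<nu> P r H \<pi>s c TYPE('d) (Suc h) (fw \<phi> w) (fs (Suc h)) * hnorm \<nu> P \<pi>s (Suc h) (fw \<phi> v)"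
    by (rule greedy_policy_gap_L2_le[OF h' greedy])
  finally show ?thesis .
qed

lemma Tstar_diff_eq_integral:
  assumes h: "h \<in> {1..<H}" and greedy: "greedy_at S A (fw \<phi> w) p"
    and s: "s \<in> space S" and a: "a \<in> space A"
  shows "Tstar A P r h (fw \<phi> w) s a - Tstar A P r h (fs (Suc h)) s a
    = (\<integral>x. fw \<phi> w x (p x) - fw \<phi> (w_star (Suc h)) x (\<pi>s (Suc h) x) \<partial>P h s a)"
proof -
  have h': "Suc h \<in> {1..H}" using h by simp
  have pm: "p \<in> S \<rightarrow>\<^sub>M A" by (rule greedy_measurable[OF greedy])
  have psm: "\<pi>s (Suc h) \<in> S \<rightarrow>\<^sub>M A" by (rule policy_measurable[OF h'])
  have "(SUP a'\<in>space A. fw \<phi> w s' a') = fw \<phi> w s' (p s')"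
    and "(SUP a'\<in>space A. fs (Suc h) s' a') = fw \<phi> (w_star (Suc h)) s' (\<pi>s (Suc h) s')"
    if "s' \<in> space (P h s a)" for s'
    using that SUP_greedy[OF greedy] SUP_greedy[OF greedy_fstar[OF h']]
      fstar_eq_fw[OF h' _ policy_space[OF h']] by (simp_all add: space_P[OF h s a])
  then have "Tstar A P r h (fw \<phi> w) s a - Tstar A P r h (fs (Suc h)) s a
      = (\<integral>x. fw \<phi> w x (p x) \<partial>P h s a) - (\<integral>x. fw \<phi> (w_star (Suc h)) x (\<pi>s (Suc h) x) \<partial>P h s a)"
    unfolding Tstar_def by (simp cong: Bochner_Integration.integral_cong)
  also have "\<dots> = (\<integral>x. fw \<phi> w x (p x) - fw \<phi> (w_star (Suc h)) x (\<pi>s (Suc h) x) \<partial>P h s a)"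
    using integrable_P[OF h s a fw_policy_measurable[OF pm] abs_fw_policy_le[OF pm]]
      integrable_P[OF h s a fw_policy_measurable[OF psm] abs_fw_policy_le[OF psm]]
    by (rule Bochner_Integration.integral_diff[symmetric])
  finally show ?thesis .
qed

lemma hnorm_Tstar_diff_le:
  assumes h: "h \<in> {1..<H}"
  shows "hnorm \<nu> P \<pi>s h (\<lambda>s a. Tstar A P r h (fw \<phi> w) s a - Tstar A P r h (fs (Suc h)) s a)
    \<le> (1 + dh A \<nu> P r H \<pi>s c TYPE('d) (Suc h) (fw \<phi> w) (fs (Suc h)))
       * hnorm \<nu> P \<pi>s (Suc h) (\<lambda>s a. fw \<phi> w s a - fs (Suc h) s a)"
proof -
  have h1: "h \<in> {1..H}" and h': "Suc h \<in> {1..H}" using h by auto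
  obtain p where greedy: "greedy_at S A (fw \<phi> w) p" using greedy_exists by blast
  have pm: "p \<in> S \<rightarrow>\<^sub>M A" by (rule greedy_measurable[OF greedy])
  have psm: "\<pi>s (Suc h) \<in> S \<rightarrow>\<^sub>M A" by (rule policy_measurable[OF h'])
  let ?w = "w_star (Suc h)"
  let ?D = "\<lambda>s'. fw \<phi> w s' (p s') - fw \<phi> ?w s' (\<pi>s (Suc h) s')"
  let ?g1 = "\<lambda>s'. fw \<phi> w s' (p s') - fw \<phi> w s' (\<pi>s (Suc h) s')"
  let ?g2 = "\<lambda>s'. fw \<phi> w s' (\<pi>s (Suc h) s') - fw \<phi> ?w s' (\<pi>s (Suc h) s')"
  let ?hn = "hnorm \<nu> P \<pi>s (Suc h) (\<lambda>s a. fw \<phi> w s a - fs (Suc h) s a)"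
  have step: "Tstar A P r h (fw \<phi> w) s (\<pi>s h s) - Tstar A P r h (fs (Suc h)) s (\<pi>s h s)
      = (\<integral>x. ?D x \<partial>P h s (\<pi>s h s))" if "s \<in> space S" for s
    by (rule Tstar_diff_eq_integral[OF h greedy that policy_space[OF h1 that]])
  have "hnorm \<nu> P \<pi>s h (\<lambda>s a. Tstar A P r h (fw \<phi> w) s a - Tstar A P r h (fs (Suc h)) s a)
      = sqrt (\<integral>s. (\<integral>x. ?D x \<partial>P h s (\<pi>s h s))\<^sup>2 \<partial>law h)"
    unfolding hnorm_def
    by (rule arg_cong[where f=sqrt], rule Bochner_Integration.integral_cong[OF refl])
      (simp add: step space_law[OF h1])
  also have "\<dots> \<le> sqrt (\<integral>x. (?D x)\<^sup>2 \<partial>law (Suc h))"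
    using fw_gap_measurable[OF pm psm] abs_fw_gap_le[OF pm psm]
    by (intro real_sqrt_le_mono integral_square_step_le[OF h])
  also have "\<dots> = sqrt (\<integral>x. (?g1 x + ?g2 x)\<^sup>2 \<partial>law (Suc h))"
    by simp
  also have "\<dots> \<le> sqrt (\<integral>x. (?g1 x)\<^sup>2 \<partial>law (Suc h)) + sqrt (\<integral>x. (?g2 x)\<^sup>2 \<partial>law (Suc h))"
    using pm psm
    by (intro sqrt_integral_square_add_le measurable_law[OF h'] fw_gap_measurable integrable_fw_gap_square[OF h'])
  also have "sqrt (\<integral>x. (?g2 x)\<^sup>2 \<partial>law (Suc h)) = ?hn"
    unfolding hnorm_def
    by (rule arg_cong[where f=sqrt], rule Bochner_Integration.integral_cong[OF refl])
      (simp add: space_law[OF h'] fstar_eq_fw[OF h' _ policy_space[OF h']])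
  finally show ?thesis
    using greedy_value_gap_L2_le[OF h' greedy] by (simp add: algebra_simps)
qed

lemma abs_integral_Pchain_greedy_gap_le:
  assumes hh: "1 \<le> h" "h \<le> h'" "h' \<le> H" and greedy: "greedy_at S A (fw \<phi> v) p"
  shows "\<bar>\<integral>s. Pchain P \<pi>s h (h' - h) (fw \<phi> u) s (\<pi>s h s) - Pchain P \<pi>s h (h' - h) (fw \<phi> u) s (p s) \<partial>law h\<bar>
    \<le> dh A \<nu> P r H \<pi>s c TYPE('d) h (fw \<phi> v) (fs h) * hnorm \<nu> P \<pi>s h' (fw \<phi> u)"
proof -
  have h: "h \<in> {1..H}" using hh by simp
  have pm: "p \<in> S \<rightarrow>\<^sub>M A" by (rule greedy_measurable[OF greedy])
  have psm: "\<pi>s h \<in> S \<rightarrow>\<^sub>M A" by (rule policy_measurable[OF h])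
  obtain u' where u': "\<forall>s\<in>space S. \<forall>a\<in>space A. Pchain P \<pi>s h (h' - h) (fw \<phi> u) s a = fw \<phi> u' s a"
    using Pchain_fw_linear[of h "h' - h" u] hh by auto
  interpret prob_space "law h" by (rule prob_space_law[OF h])
  have "(\<integral>s. Pchain P \<pi>s h (h' - h) (fw \<phi> u) s (\<pi>s h s) - Pchain P \<pi>s h (h' - h) (fw \<phi> u) s (p s) \<partial>law h)
      = (\<integral>s. fw \<phi> u' s (\<pi>s h s) - fw \<phi> u' s (p s) \<partial>law h)"
    using u' policy_space[OF h] greedy_space[OF greedy]
    by (intro Bochner_Integration.integral_cong[OF refl]) (simp add: space_law[OF h])
  also have "\<bar>\<dots>\<bar> \<le> sqrt (\<integral>s. (fw \<phi> u' s (\<pi>s h s) - fw \<phi> u' s (p s))\<^sup>2 \<partial>law h)"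
    by (rule abs_integral_le_sqrt_integral_square[OF measurable_law[OF h fw_gap_measurable[OF psm pm]]
          integrable_fw_gap_square[OF h psm pm]])
  also have "\<dots> = sqrt (\<integral>s. (fw \<phi> u' s (p s) - fw \<phi> u' s (\<pi>s h s))\<^sup>2 \<partial>law h)"
    by (simp add: power2_commute)
  also have "\<dots> \<le> dh A \<nu> P r H \<pi>s c TYPE('d) h (fw \<phi> v) (fs h) * hnorm \<nu> P \<pi>s h (fw \<phi> u')"
    by (rule greedy_policy_gap_L2_le[OF h greedy])
  also have "hnorm \<nu> P \<pi>s h (fw \<phi> u') = hnorm \<nu> P \<pi>s h (Pchain P \<pi>s h (h' - h) (fw \<phi> u))"
    using u' policy_space[OF h] by (intro hnorm_cong[OF h]) simp
  also have "dh A \<nu> P r H \<pi>s c TYPE('d) h (fw \<phi> v) (fs h) * \<dots>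
      \<le> dh A \<nu> P r H \<pi>s c TYPE('d) h (fw \<phi> v) (fs h) * hnorm \<nu> P \<pi>s h' (fw \<phi> u)"
    using hnorm_Pchain_le[of h "h' - h" u] hh by (intro mult_left_mono dh_nonneg) simp_all
  finally show ?thesis .
qed

lemma Ppol_diff_ratio_le_dh:
  assumes greedy: "\<forall>h\<in>{1..H}. greedy_at S A (fw \<phi> (W h)) (\<pi> h)"
    and h: "h \<in> {2..H}" and pos: "0 < hnorm \<nu> P \<pi>s h (fw \<phi> v)"
  shows "hnorm \<nu> P \<pi>s (h - 1) (\<lambda>s a. Ppol P \<pi> (h - 1) (fw \<phi> v) s a - Ppol P \<pi>s (h - 1) (fw \<phi> v) s a)
      / hnorm \<nu> P \<pi>s h (fw \<phi> v)
    \<le> dh A \<nu> P r H \<pi>s c TYPE('d) h (fw \<phi> (W h)) (fs h)"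
proof -
  obtain k where k: "h = Suc k" "k \<in> {1..<H}" using h by (cases h) auto
  have "greedy_at S A (fw \<phi> (W h)) (\<pi> (Suc k))" using greedy h k(1) by auto
  then have "hnorm \<nu> P \<pi>s k (\<lambda>s a. Ppol P \<pi> k (fw \<phi> v) s a - Ppol P \<pi>s k (fw \<phi> v) s a)
    \<le> dh A \<nu> P r H \<pi>s c TYPE('d) (Suc k) (fw \<phi> (W h)) (fs (Suc k)) * hnorm \<nu> P \<pi>s (Suc k) (fw \<phi> v)"
    by (rule hnorm_Ppol_greedy_diff_le[OF k(2)])
  then show ?thesis
    using pos by (simp add: k(1) pos_divide_le_eq)
qed

lemma Tstar_diff_le_radius:
  assumes "h \<in> {1..H-1}" and "dh A \<nu> P r H \<pi>s c TYPE('d) (h + 1) (fw \<phi> w) (fs (h + 1)) \<le> \<rho>"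
  shows "hnorm \<nu> P \<pi>s h (\<lambda>s a. Tstar A P r h (fw \<phi> w) s a - Tstar A P r h (fs (h + 1)) s a)
    \<le> (1 + \<rho>) * hnorm \<nu> P \<pi>s (h + 1) (\<lambda>s a. fw \<phi> w s a - fs (h + 1) s a)"
proof -
  have h: "h \<in> {1..<H}" using assms(1) by auto
  have "(1 + dh A \<nu> P r H \<pi>s c TYPE('d) (Suc h) (fw \<phi> w) (fs (Suc h)))
      * hnorm \<nu> P \<pi>s (Suc h) (\<lambda>s a. fw \<phi> w s a - fs (Suc h) s a)
    \<le> (1 + \<rho>) * hnorm \<nu> P \<pi>s (Suc h) (\<lambda>s a. fw \<phi> w s a - fs (Suc h) s a)"
    using assms(2) by (intro mult_right_mono hnorm_nonneg) simp_all
  then show ?thesis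
    using order_trans[OF hnorm_Tstar_diff_le[OF h]] by simp
qed

lemma Pchain_gap_ratio_le:
  assumes greedy: "\<forall>h\<in>{1..H}. greedy_at S A (fw \<phi> (W h)) (\<pi> h)"
    and hh: "1 \<le> h \<and> h \<le> h' \<and> h' \<le> H - 1" and pos: "0 < hnorm \<nu> P \<pi>s h' (fw \<phi> v)"
  shows "\<bar>\<integral>s. Pchain P \<pi>s h (h' - h) (fw \<phi> v) s (\<pi>s h s) - Pchain P \<pi>s h (h' - h) (fw \<phi> v) s (\<pi> h s) \<partial>law h\<bar>
      / hnorm \<nu> P \<pi>s h' (fw \<phi> v)
    \<le> sqrt (real CARD('d)) * cnorm \<nu> P \<pi>s h (c h)
      * hnorm \<nu> P \<pi>s h (\<lambda>s a. fw \<phi> (W h) s a - fs h s a) / hnorm \<nu> P \<pi>s h (fs h)"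
proof -
  have "greedy_at S A (fw \<phi> (W h)) (\<pi> h)" using greedy hh by auto
  then have "\<bar>\<integral>s. Pchain P \<pi>s h (h' - h) (fw \<phi> v) s (\<pi>s h s) - Pchain P \<pi>s h (h' - h) (fw \<phi> v) s (\<pi> h s) \<partial>law h\<bar>
    \<le> dh A \<nu> P r H \<pi>s c TYPE('d) h (fw \<phi> (W h)) (fs h) * hnorm \<nu> P \<pi>s h' (fw \<phi> v)"
    using hh by (intro abs_integral_Pchain_greedy_gap_le) auto
  then show ?thesis
    using pos by (simp add: pos_divide_le_eq dh_def mult_ac)
qed

end

theorem lemma1:
  fixes S :: "'s measure" and A :: "'a measure"
    and P :: "nat \<Rightarrow> 's \<Rightarrow> 'a \<Rightarrow> 's measure"
    and r :: "nat \<Rightarrow> 's \<Rightarrow> 'a \<Rightarrow> real"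
    and \<nu> :: "'s measure" and H :: nat
    and \<phi> :: "'s \<Rightarrow> 'a \<Rightarrow> real^'d::finite"
    and \<pi>s :: "nat \<Rightarrow> 's \<Rightarrow> 'a"
    and c :: "nat \<Rightarrow> 's \<Rightarrow> real"
    and \<rho> :: "nat \<Rightarrow> real"
  assumes H2: "H \<ge> 2"
    and nu_prob: "prob_space \<nu>" and nu_sets: "sets \<nu> = sets S"
    and kernel: "\<forall>h\<in>{1..<H}. (\<forall>s\<in>space S. \<forall>a\<in>space A. prob_space (P h s a) \<and> sets (P h s a) = sets S)
                    \<and> (\<lambda>(s, a). P h s a) \<in> S \<Otimes>\<^sub>M A \<rightarrow>\<^sub>M subprob_algebra S"
    and phi_meas: "(\<lambda>(s, a). \<phi> s a) \<in> borel_measurable (S \<Otimes>\<^sub>M A)"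
    and phi_bound: "\<forall>s\<in>space S. \<forall>a\<in>space A. norm (\<phi> s a) \<le> 1"
    and greedy_exists: "\<forall>w. \<exists>p. greedy_at S A (fw \<phi> w) p"
    and pistar_greedy: "\<forall>h\<in>{1..H}. greedy_at S A (fstar A P r H h) (\<pi>s h)"
    and fstar_in_F: "\<forall>h\<in>{1..H}. \<exists>w. \<forall>s\<in>space S. \<forall>a\<in>space A. fstar A P r H h s a = fw \<phi> w s a"
    and closure: "\<forall>W \<pi>. (\<forall>h\<in>{1..H}. greedy_at S A (fw \<phi> (W h)) (\<pi> h)) \<longrightarrow>
                    (\<forall>h\<in>{1..<H}. \<forall>v. \<exists>v'. \<forall>s\<in>space S. \<forall>a\<in>space A.
                        r h s a + Ppol P \<pi> h (fw \<phi> v) s a = fw \<phi> v' s a)"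
    and Sigma_pd: "\<forall>h\<in>{1..H}. \<forall>x. x \<noteq> 0 \<longrightarrow> x \<bullet> (Sigma \<nu> P \<pi>s \<phi> h *v x) > 0"
    and fstar_pos: "\<forall>h\<in>{1..H}. hnorm \<nu> P \<pi>s h (fstar A P r H h) > 0"
    and c_reg: "\<forall>h\<in>{1..H}. c h \<in> borel_measurable S \<and> (\<forall>s\<in>space S. c h s \<ge> 0)
                   \<and> integrable (mu \<nu> P \<pi>s h) (\<lambda>s. (c h s)\<^sup>2)"
    and curv: "\<forall>h\<in>{1..H}. \<forall>v p. greedy_at S A (fw \<phi> v) p \<longrightarrow> (\<forall>s\<in>space S.
        qnorm (matrix_inv (Sigma \<nu> P \<pi>s \<phi> h)) (\<phi> s (p s) - \<phi> s (\<pi>s h s))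
          \<le> c h s * sqrt (real CARD('d)) * hnorm \<nu> P \<pi>s h (\<lambda>s a. fw \<phi> v s a - fstar A P r H h s a)
               / hnorm \<nu> P \<pi>s h (fstar A P r H h)
      \<and> fw \<phi> v s (p s) - fw \<phi> v s (\<pi>s h s)
          \<le> c h s * sqrt (real CARD('d)) * hnorm \<nu> P \<pi>s h (fstar A P r H h)
             * (hnorm \<nu> P \<pi>s h (\<lambda>s a. fw \<phi> v s a - fstar A P r H h s a)
                  / hnorm \<nu> P \<pi>s h (fstar A P r H h))\<^sup>2)"
  shows
    \<comment> \<open>(a) pseudo-metric on F x F\<close>
    "(\<forall>h\<in>{1..H}. \<forall>v1 v2 v3.
        dh A \<nu> P r H \<pi>s c TYPE('d) h (fw \<phi> v1) (fw \<phi> v1) = 0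
      \<and> dh A \<nu> P r H \<pi>s c TYPE('d) h (fw \<phi> v1) (fw \<phi> v2) \<ge> 0
      \<and> dh A \<nu> P r H \<pi>s c TYPE('d) h (fw \<phi> v1) (fw \<phi> v2) = dh A \<nu> P r H \<pi>s c TYPE('d) h (fw \<phi> v2) (fw \<phi> v1)
      \<and> dh A \<nu> P r H \<pi>s c TYPE('d) h (fw \<phi> v1) (fw \<phi> v3)
          \<le> dh A \<nu> P r H \<pi>s c TYPE('d) h (fw \<phi> v1) (fw \<phi> v2) + dh A \<nu> P r H \<pi>s c TYPE('d) h (fw \<phi> v2) (fw \<phi> v3))
   \<comment> \<open>(a) transition-difference bound\<close>
   \<and> (\<forall>W \<pi>. (\<forall>h\<in>{1..H}. greedy_at S A (fw \<phi> (W h)) (\<pi> h)) \<longrightarrow>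
        (\<forall>h\<in>{2..H}. \<forall>v. hnorm \<nu> P \<pi>s h (fw \<phi> v) > 0 \<longrightarrow>
           hnorm \<nu> P \<pi>s (h - 1) (\<lambda>s a. Ppol P \<pi> (h - 1) (fw \<phi> v) s a - Ppol P \<pi>s (h - 1) (fw \<phi> v) s a)
             / hnorm \<nu> P \<pi>s h (fw \<phi> v)
           \<le> dh A \<nu> P r H \<pi>s c TYPE('d) h (fw \<phi> (W h)) (fstar A P r H h)))
   \<comment> \<open>(b)\<close>
   \<and> ((\<forall>h\<in>{1..H}. 0 < \<rho> h \<and> \<rho> h \<le> 1 / (2 * (real H - real h + 1)))
       \<and> (\<forall>h\<in>{2..H-1}. \<rho> h \<le> (1/2) * (1 / (real H - real h + 1)) * (1 / (1 + ln (real H))))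
      \<longrightarrow> (\<exists>\<kappa>::nat \<Rightarrow> real.
            (\<forall>W. (\<forall>h\<in>{1..H}. dh A \<nu> P r H \<pi>s c TYPE('d) h (fw \<phi> (W h)) (fstar A P r H h) \<le> \<rho> h) \<longrightarrow>
               (\<forall>h\<in>{1..H-1}.
                  hnorm \<nu> P \<pi>s h (\<lambda>s a. Tstar A P r h (fw \<phi> (W (h + 1))) s a - Tstar A P r h (fstar A P r H (h + 1)) s a)
                  \<le> \<kappa> h * hnorm \<nu> P \<pi>s (h + 1) (\<lambda>s a. fw \<phi> (W (h + 1)) s a - fstar A P r H (h + 1) s a)))
          \<and> (\<forall>h h'. 1 \<le> h \<and> h \<le> h' \<and> h' \<le> H \<longrightarrow> (\<Prod>i\<in>{h..<h'}. \<kappa> i) \<le> 3)))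
   \<comment> \<open>(c)\<close>
   \<and> (\<forall>W \<pi>. (\<forall>h\<in>{1..H}. greedy_at S A (fw \<phi> (W h)) (\<pi> h)) \<longrightarrow>
        (\<forall>h h'. 1 \<le> h \<and> h \<le> h' \<and> h' \<le> H - 1 \<longrightarrow> (\<forall>v. hnorm \<nu> P \<pi>s h' (fw \<phi> v) > 0 \<longrightarrow>
           \<bar>\<integral>s. Pchain P \<pi>s h (h' - h) (fw \<phi> v) s (\<pi>s h s) - Pchain P \<pi>s h (h' - h) (fw \<phi> v) s (\<pi> h s)
              \<partial>(mu \<nu> P \<pi>s h)\<bar> / hnorm \<nu> P \<pi>s h' (fw \<phi> v)
           \<le> sqrt (real CARD('d)) * cnorm \<nu> P \<pi>s h (c h)
              * hnorm \<nu> P \<pi>s h (\<lambda>s a. fw \<phi> (W h) s a - fstar A P r H h s a) / hnorm \<nu> P \<pi>s h (fstar A P r H h))))"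
proof -
  interpret linear_mdp S A P \<nu> H \<pi>s r \<phi> c
  proof (rule linear_mdp.intro[OF finite_horizon_mdp.intro linear_mdp_axioms.intro])
    show "\<pi>s h \<in> S \<rightarrow>\<^sub>M A" if "h \<in> {1..H}" for h
      using pistar_greedy that by (simp add: greedy_at_def)
  qed (fact nu_prob nu_sets kernel phi_meas phi_bound greedy_exists pistar_greedy fstar_in_F closure
      Sigma_pd fstar_pos c_reg curv)+
  show ?thesis
  proof (intro conjI ballI allI impI, goal_cases)
    case 1 show ?case by (rule dh_self)
  next
    case 2 show ?case by (rule dh_nonneg)
  next
    case 3 show ?case by (rule dh_commute)
  next
    case 4 then show ?case by (rule dh_fw_triangle)
  next
    case 5 then show ?case by (rule Ppol_diff_ratio_le_dh)
  next
    case radii: 6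
    show ?case
    proof (intro exI[of _ "\<lambda>i. 1 + \<rho> (i + 1)"] conjI allI impI ballI, goal_cases)
      case (1 W h)
      then show ?case by (intro Tstar_diff_le_radius) auto
    next
      case (2 h h')
      then show ?case using prod_one_plus_le_three[OF H2] radii by blast
    qed
  next
    case 7 then show ?case by (rule Pchain_gap_ratio_le)
  qed
qed

end
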